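(* Let $Q$ be a QNP, let $P=T_D(Q)$ be its direct translation, and let $\pi$ be a policy for $Q$ (and thus also for $P$). The following are equivalent: (1) $\pi$ solves $Q$; (2) $\pi$ is a strong cyclic solution of $Q$ and $\pi$ is $Q$-terminating; (3) $\pi$ is a strong cyclic solution of $P$ and $\pi$ is $P$-terminating.
   Context: A qualitative numerical problem (QNP) is a tuple $Q=\langle F,V,I,O,G\rangle$ where $F$ is a finite set of propositional variables and $V$ a finite set of numerical variables taking non-negative real values. $F$-literals are $p,\neg p$; $V$-literals are $X=0$ and $X>0$. $I$, $G$ are consistent sets of literals. Each action $a\in O$ has a precondition $Pre(a)$ (set of literals), propositional effects $\mathit{Eff}(a)$ (set of $F$-literals) and numerical effects $N(a)$ (atoms $Inc(X)$, $Dec(X)$, at most one per variable); if $Dec(X)\in N(a)$ then $X>0\in Pre(a)$. A state $s$ assigns truth values to $F$ and reals $s[X]\ge0$ to $V$; initial states satisfy $I$ under a closed-world assumption; goal states satisfy $G$. For $a$ applicable in $s$ ($s$ satisfies $Pre(a)$), $s'\in F(a,s)$ iff propositional effects are applied (others unchanged), $s'[X]>s[X]$ if $Inc(X)\in N(a)$, $s'[X]<s[X]$ if $Dec(X)\in N(a)$, $s'[X]=s[X]$ otherwise. For $\epsilon>0$, an $\epsilon$-sequence is $s_0,a_0,s_1,\dots$ with $a_i$ applicable, $s_{i+1}\in F(a_i,s_i)$ and, for all $X,i$, $s_{i+1}[X]\neq s_i[X]$ implying $|s_{i+1}[X]-s_i[X]|\ge\epsilon$ or $0=s_{i+1}[X]<s_i[X]<\epsilon$;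 trajectories of $Q$ are $\epsilon$-sequences for some $\epsilon>0$ (an $\epsilon$-trajectory if it starts at an initial state). The boolean state $\bar s$ is the truth valuation on atoms $p\in F$ and $X=0$. A policy is a partial map $\pi$ from states to actions with $\pi(s)=\pi(s')$ whenever $\bar s=\bar s'$; a $\pi$-trajectory has $a_i=\pi(s_i)$; it is maximal if it is infinite with no goal state, or ends at its first goal state, or ends at $s_n$ with $\pi(s_n)$ undefined or not applicable. $\pi$ solves $Q$ iff for every $\epsilon>0$ all maximal $\epsilon$-$\pi$-trajectories from initial states reach a goal state. $\pi$ is a strong cyclic solution of $Q$ iff for every $\pi$-trajectory from an initial state to $s$ there is a $\pi$-trajectory from $s$ to a goal state. $\pi$ is $Q$-terminating iff all $\pi$-trajectories from initial states are finite. $T_D(Q)$ is the FOND problem over $F\cup\{p_{X=0}:X\in V\}$ obtained by reading $X=0$ as $p_{X=0}$, $X>0$ as $\neg p_{X=0}$ in $I$, $G$, preconditions, keeping propositional effects, replacing $Inc(X)$ by the deterministic effect $\neg p_{X=0}$ and $Dec(X)$ by the nondeterministic effect $\neg p_{X=0}\mid p_{X=0}$; its states are the boolean states, it has a unique initial state, and $\pi$ acts via $\bar s\mapsto\pi(s)$. A $\pi$-trajectory of $T_D(Q)$ is a sequence with $\pi(\bar s_i)$ applicable and $\bar s_{i+1}$ a possible successor; $\pi$ is a strong cyclic solution of $T_D(Q)$ iff for every $\pi$-trajectory from the initial state to $\bar s$ there is a $\pi$-trajectory from $\bar s$ to a goal state. $Dec(X)$/$Inc(X)$ actions of $T_D(Q)$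 are those coming from actions of $Q$ with $Dec(X)$/$Inc(X)$ in $N(a)$. An infinite $\pi$-trajectory of $T_D(Q)$ is terminating if for some $X\in V$, $\pi(\bar s)$ is a $Dec(X)$ action for some state $\bar s$ occurring infinitely often and $\pi(\bar s')$ is not an $Inc(X)$ action for any state occurring infinitely often. $\pi$ is $P$-terminating iff all infinite $\pi$-trajectories of $P$ from its initial state are terminating. *)

theory Defs
  imports Main "HOL-Library.Extended_Nat"
begin

datatype ('f, 'v) lit = PosF 'f | NegF 'f | Zero 'v | Pos 'v

datatype neff = Inc | Dec

text \<open>A QNP.  Numerical effects are a partial map from variables to Inc/Dec,
  which encodes "at most one atom per variable".\<close>
record ('f, 'v, 'a) qnp =
  Fs   :: "'f set"
  Vs   :: "'v set"
  Init :: "('f, 'v) lit set"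
  Ops  :: "'a set"
  Goal :: "('f, 'v) lit set"
  Pre  :: "'a \<Rightarrow> ('f, 'v) lit set"
  Eff  :: "'a \<Rightarrow> ('f, 'v) lit set"
  Num  :: "'a \<Rightarrow> 'v \<Rightarrow> neff option"

fun lit_over :: "'f set \<Rightarrow> 'v set \<Rightarrow> ('f, 'v) lit \<Rightarrow> bool" where
  "lit_over F V (PosF p) = (p \<in> F)"
| "lit_over F V (NegF p) = (p \<in> F)"
| "lit_over F V (Zero X) = (X \<in> V)"
| "lit_over F V (Pos X) = (X \<in> V)"

fun is_Flit :: "('f, 'v) lit \<Rightarrow> bool" where
  "is_Flit (PosF p) = True"
| "is_Flit (NegF p) = True"
| "is_Flit _ = False"

definition consistent :: "('f, 'v) lit set \<Rightarrow> bool" where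
  "consistent L \<longleftrightarrow> (\<forall>p. \<not> (PosF p \<in> L \<and> NegF p \<in> L)) \<and> (\<forall>X. \<not> (Zero X \<in> L \<and> Pos X \<in> L))"

definition wf_qnp :: "('f, 'v, 'a) qnp \<Rightarrow> bool" where
  "wf_qnp Q \<longleftrightarrow>
     finite (Fs Q) \<and> finite (Vs Q) \<and>
     (\<forall>l \<in> Init Q. lit_over (Fs Q) (Vs Q) l) \<and> consistent (Init Q) \<and>
     (\<forall>l \<in> Goal Q. lit_over (Fs Q) (Vs Q) l) \<and> consistent (Goal Q) \<and>
     (\<forall>a \<in> Ops Q.
        (\<forall>l \<in> Pre Q a. lit_over (Fs Q) (Vs Q) l) \<and>
        (\<forall>l \<in> Eff Q a. is_Flit l \<and> lit_over (Fs Q) (Vs Q) l) \<and> consistent (Eff Q a) \<and>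
        (\<forall>X. Num Q a X \<noteq> None \<longrightarrow> X \<in> Vs Q) \<and>
        (\<forall>X. Num Q a X = Some Dec \<longrightarrow> Pos X \<in> Pre Q a))"

text \<open>A state: truth values of the propositional variables and non-negative reals for the
  numerical variables (canonically False / 0 outside F / V).\<close>
type_synonym ('f, 'v) state = "('f \<Rightarrow> bool) \<times> ('v \<Rightarrow> real)"

definition is_state :: "('f, 'v, 'a) qnp \<Rightarrow> ('f, 'v) state \<Rightarrow> bool" where
  "is_state Q s \<longleftrightarrow> (\<forall>p. p \<notin> Fs Q \<longrightarrow> \<not> fst s p) \<and> (\<forall>X. X \<notin> Vs Q \<longrightarrow> snd s X = 0)
     \<and> (\<forall>X. snd s X \<ge> 0)"

fun holds :: "('f, 'v) state \<Rightarrow> ('f, 'v) lit \<Rightarrow> bool" where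
  "holds s (PosF p) = fst s p"
| "holds s (NegF p) = (\<not> fst s p)"
| "holds s (Zero X) = (snd s X = 0)"
| "holds s (Pos X) = (snd s X > 0)"

definition applicable :: "('f, 'v, 'a) qnp \<Rightarrow> 'a \<Rightarrow> ('f, 'v) state \<Rightarrow> bool" where
  "applicable Q a s \<longleftrightarrow> (\<forall>l \<in> Pre Q a. holds s l)"

definition is_goal :: "('f, 'v, 'a) qnp \<Rightarrow> ('f, 'v) state \<Rightarrow> bool" where
  "is_goal Q s \<longleftrightarrow> (\<forall>l \<in> Goal Q. holds s l)"

text \<open>Initial states: satisfy I under the closed-world assumption (an atom p, resp. X = 0,
  is true iff it appears positively in I).\<close>
definition is_init :: "('f, 'v, 'a) qnp \<Rightarrow> ('f, 'v) state \<Rightarrow> bool" where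
  "is_init Q s \<longleftrightarrow> is_state Q s \<and> (\<forall>l \<in> Init Q. holds s l) \<and>
     (\<forall>p \<in> Fs Q. fst s p \<longleftrightarrow> PosF p \<in> Init Q) \<and>
     (\<forall>X \<in> Vs Q. snd s X = 0 \<longleftrightarrow> Zero X \<in> Init Q)"

definition succ :: "('f, 'v, 'a) qnp \<Rightarrow> 'a \<Rightarrow> ('f, 'v) state \<Rightarrow> ('f, 'v) state \<Rightarrow> bool" where
  "succ Q a s s' \<longleftrightarrow> is_state Q s' \<and>
     (\<forall>p \<in> Fs Q. fst s' p = (if PosF p \<in> Eff Q a then True
                              else if NegF p \<in> Eff Q a then False else fst s p)) \<and>
     (\<forall>X \<in> Vs Q. (case Num Q a X of
                     Some Inc \<Rightarrow> snd s' X > snd s X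
                   | Some Dec \<Rightarrow> snd s' X < snd s X
                   | None \<Rightarrow> snd s' X = snd s X))"

definition eps_step :: "real \<Rightarrow> ('f, 'v) state \<Rightarrow> ('f, 'v) state \<Rightarrow> bool" where
  "eps_step \<epsilon> s s' \<longleftrightarrow> (\<forall>X. snd s' X \<noteq> snd s X \<longrightarrow>
      (\<bar>snd s' X - snd s X\<bar> \<ge> \<epsilon> \<or> (0 = snd s' X \<and> snd s' X < snd s X \<and> snd s X < \<epsilon>)))"

text \<open>A (finite or infinite) sequence s_0, a_0, s_1, ... is given by functions ss, as and a length
  n :: enat (states s_0..s_n; n = \<infinity> for infinite sequences).\<close>
definition eps_seq :: "('f, 'v, 'a) qnp \<Rightarrow> real \<Rightarrow> (nat \<Rightarrow> ('f, 'v) state) \<Rightarrow> (nat \<Rightarrow> 'a) \<Rightarrow> enat \<Rightarrow> bool" where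
  "eps_seq Q \<epsilon> ss as n \<longleftrightarrow>
     (\<forall>i. enat i \<le> n \<longrightarrow> is_state Q (ss i)) \<and>
     (\<forall>i. enat i < n \<longrightarrow> as i \<in> Ops Q \<and> applicable Q (as i) (ss i) \<and>
                         succ Q (as i) (ss i) (ss (Suc i)) \<and> eps_step \<epsilon> (ss i) (ss (Suc i)))"

definition trajectory :: "('f, 'v, 'a) qnp \<Rightarrow> (nat \<Rightarrow> ('f, 'v) state) \<Rightarrow> (nat \<Rightarrow> 'a) \<Rightarrow> enat \<Rightarrow> bool" where
  "trajectory Q ss as n \<longleftrightarrow> (\<exists>\<epsilon> > 0. eps_seq Q \<epsilon> ss as n)"

text \<open>Boolean state: truth of p (p \<in> F) and of the atoms X = 0 (X \<in> V);
  canonically False / True outside F / V.\<close>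
type_synonym ('f, 'v) bstate = "('f \<Rightarrow> bool) \<times> ('v \<Rightarrow> bool)"

definition bar :: "('f, 'v) state \<Rightarrow> ('f, 'v) bstate" where
  "bar s = (fst s, \<lambda>X. snd s X = 0)"

text \<open>A policy is a partial map from states to actions that only depends on the boolean
  state; we represent it by the induced partial map on boolean states, acting on a state s
  of Q as pi (bar s), and on the states of T_D(Q) directly.\<close>
type_synonym ('f, 'v, 'a) policy = "('f, 'v) bstate \<Rightarrow> 'a option"

definition is_policy :: "('f, 'v, 'a) qnp \<Rightarrow> ('f, 'v, 'a) policy \<Rightarrow> bool" where
  "is_policy Q \<pi> \<longleftrightarrow> (\<forall>b a. \<pi> b = Some a \<longrightarrow> a \<in> Ops Q)"

text \<open>pi-trajectory: a_i = pi(s_i); goal states are terminal (a pi-trajectory ends at the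
  first goal state it reaches).\<close>
definition pi_traj :: "('f, 'v, 'a) qnp \<Rightarrow> ('f, 'v, 'a) policy \<Rightarrow> (nat \<Rightarrow> ('f, 'v) state) \<Rightarrow> (nat \<Rightarrow> 'a) \<Rightarrow> enat \<Rightarrow> bool" where
  "pi_traj Q \<pi> ss as n \<longleftrightarrow> (\<forall>i. enat i < n \<longrightarrow> \<pi> (bar (ss i)) = Some (as i) \<and> \<not> is_goal Q (ss i))"

definition maximal :: "('f, 'v, 'a) qnp \<Rightarrow> ('f, 'v, 'a) policy \<Rightarrow> (nat \<Rightarrow> ('f, 'v) state) \<Rightarrow> enat \<Rightarrow> bool" where
  "maximal Q \<pi> ss n \<longleftrightarrow> n = \<infinity> \<or>
     (\<exists>m. n = enat m \<and> (is_goal Q (ss m) \<or> \<pi> (bar (ss m)) = None \<or>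
                         (\<exists>a. \<pi> (bar (ss m)) = Some a \<and> \<not> applicable Q a (ss m))))"

definition reaches_goal :: "('f, 'v, 'a) qnp \<Rightarrow> (nat \<Rightarrow> ('f, 'v) state) \<Rightarrow> enat \<Rightarrow> bool" where
  "reaches_goal Q ss n \<longleftrightarrow> (\<exists>i. enat i \<le> n \<and> is_goal Q (ss i))"

definition solves :: "('f, 'v, 'a) policy \<Rightarrow> ('f, 'v, 'a) qnp \<Rightarrow> bool" where
  "solves \<pi> Q \<longleftrightarrow> (\<forall>\<epsilon> > 0. \<forall>ss as n.
     eps_seq Q \<epsilon> ss as n \<and> is_init Q (ss 0) \<and> pi_traj Q \<pi> ss as n \<and> maximal Q \<pi> ss n
       \<longrightarrow> reaches_goal Q ss n)"

definition strong_cyclic_Q :: "('f, 'v, 'a) policy \<Rightarrow> ('f, 'v, 'a) qnp \<Rightarrow> bool" where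
  "strong_cyclic_Q \<pi> Q \<longleftrightarrow> (\<forall>ss as m.
     trajectory Q ss as (enat m) \<and> is_init Q (ss 0) \<and> pi_traj Q \<pi> ss as (enat m) \<longrightarrow>
     (\<exists>ss' as' k. trajectory Q ss' as' (enat k) \<and> pi_traj Q \<pi> ss' as' (enat k) \<and>
                  ss' 0 = ss m \<and> is_goal Q (ss' k)))"

definition Q_terminating :: "('f, 'v, 'a) policy \<Rightarrow> ('f, 'v, 'a) qnp \<Rightarrow> bool" where
  "Q_terminating \<pi> Q \<longleftrightarrow> (\<forall>ss as n.
     trajectory Q ss as n \<and> is_init Q (ss 0) \<and> pi_traj Q \<pi> ss as n \<longrightarrow> n \<noteq> \<infinity>)"

definition TD_state :: "('f, 'v, 'a) qnp \<Rightarrow> ('f, 'v) bstate \<Rightarrow> bool" where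
  "TD_state Q b \<longleftrightarrow> (\<forall>p. p \<notin> Fs Q \<longrightarrow> \<not> fst b p) \<and> (\<forall>X. X \<notin> Vs Q \<longrightarrow> snd b X)"

text \<open>X = 0 is read as the atom p_{X=0}, X > 0 as its negation.\<close>
fun bholds :: "('f, 'v) bstate \<Rightarrow> ('f, 'v) lit \<Rightarrow> bool" where
  "bholds b (PosF p) = fst b p"
| "bholds b (NegF p) = (\<not> fst b p)"
| "bholds b (Zero X) = snd b X"
| "bholds b (Pos X) = (\<not> snd b X)"

definition TD_applicable :: "('f, 'v, 'a) qnp \<Rightarrow> 'a \<Rightarrow> ('f, 'v) bstate \<Rightarrow> bool" where
  "TD_applicable Q a b \<longleftrightarrow> (\<forall>l \<in> Pre Q a. bholds b l)"

definition TD_goal :: "('f, 'v, 'a) qnp \<Rightarrow> ('f, 'v) bstate \<Rightarrow> bool" where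
  "TD_goal Q b \<longleftrightarrow> (\<forall>l \<in> Goal Q. bholds b l)"

text \<open>The unique initial state of T_D(Q) (closed-world assumption on I).\<close>
definition TD_init :: "('f, 'v, 'a) qnp \<Rightarrow> ('f, 'v) bstate \<Rightarrow> bool" where
  "TD_init Q b \<longleftrightarrow> TD_state Q b \<and>
     (\<forall>p \<in> Fs Q. fst b p \<longleftrightarrow> PosF p \<in> Init Q) \<and>
     (\<forall>X \<in> Vs Q. snd b X \<longleftrightarrow> Zero X \<in> Init Q)"

text \<open>Possible successors: propositional effects kept, Inc(X) becomes the effect not p_{X=0},
  Dec(X) the nondeterministic effect not p_{X=0} | p_{X=0}.\<close>
definition TD_succ :: "('f, 'v, 'a) qnp \<Rightarrow> 'a \<Rightarrow> ('f, 'v) bstate \<Rightarrow> ('f, 'v) bstate \<Rightarrow> bool" where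
  "TD_succ Q a b b' \<longleftrightarrow> TD_state Q b' \<and>
     (\<forall>p \<in> Fs Q. fst b' p = (if PosF p \<in> Eff Q a then True
                              else if NegF p \<in> Eff Q a then False else fst b p)) \<and>
     (\<forall>X \<in> Vs Q. (case Num Q a X of
                     Some Inc \<Rightarrow> \<not> snd b' X
                   | Some Dec \<Rightarrow> True
                   | None \<Rightarrow> snd b' X = snd b X))"

definition TD_traj :: "('f, 'v, 'a) qnp \<Rightarrow> ('f, 'v, 'a) policy \<Rightarrow> (nat \<Rightarrow> ('f, 'v) bstate) \<Rightarrow> (nat \<Rightarrow> 'a) \<Rightarrow> enat \<Rightarrow> bool" where
  "TD_traj Q \<pi> bs as n \<longleftrightarrow>
     (\<forall>i. enat i \<le> n \<longrightarrow> TD_state Q (bs i)) \<and>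
     (\<forall>i. enat i < n \<longrightarrow> \<pi> (bs i) = Some (as i) \<and> as i \<in> Ops Q \<and> TD_applicable Q (as i) (bs i) \<and>
                         TD_succ Q (as i) (bs i) (bs (Suc i)) \<and> \<not> TD_goal Q (bs i))"

definition strong_cyclic_TD :: "('f, 'v, 'a) policy \<Rightarrow> ('f, 'v, 'a) qnp \<Rightarrow> bool" where
  "strong_cyclic_TD \<pi> Q \<longleftrightarrow> (\<forall>bs as m.
     TD_traj Q \<pi> bs as (enat m) \<and> TD_init Q (bs 0) \<longrightarrow>
     (\<exists>bs' as' k. TD_traj Q \<pi> bs' as' (enat k) \<and> bs' 0 = bs m \<and> TD_goal Q (bs' k)))"

definition terminating_TD_traj :: "('f, 'v, 'a) qnp \<Rightarrow> ('f, 'v, 'a) policy \<Rightarrow> (nat \<Rightarrow> ('f, 'v) bstate) \<Rightarrow> bool" where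
  "terminating_TD_traj Q \<pi> bs \<longleftrightarrow> (\<exists>X \<in> Vs Q.
     (\<exists>b a. infinite {i. bs i = b} \<and> \<pi> b = Some a \<and> Num Q a X = Some Dec) \<and>
     (\<forall>b a. infinite {i. bs i = b} \<and> \<pi> b = Some a \<longrightarrow> Num Q a X \<noteq> Some Inc))"

definition TD_terminating :: "('f, 'v, 'a) policy \<Rightarrow> ('f, 'v, 'a) qnp \<Rightarrow> bool" where
  "TD_terminating \<pi> Q \<longleftrightarrow> (\<forall>bs as.
     TD_traj Q \<pi> bs as \<infinity> \<and> TD_init Q (bs 0) \<longrightarrow> terminating_TD_traj Q \<pi> bs)"

end

theory Submission
  imports Defs
begin

text \<open>Boolean states turn every \<open>\<epsilon>\<close>-trajectory of \<open>Q\<close> into a trajectory of \<open>T_D(Q)\<close>.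
  Conversely, a trajectory of \<open>T_D(Q)\<close> is realized by an \<open>\<epsilon>\<close>-trajectory of \<open>Q\<close> from any
  state with the right boolean abstraction, provided every variable has only finitely many
  decrements pending before its next increment: give a positive \<open>X\<close> the value
  \<open>c\<^sub>X (1 + #pending decrements + #increments so far)\<close>. This holds for finite
  trajectories, and for infinite ones unless the trajectory is terminating; so strong cyclicity
  and termination transfer between \<open>Q\<close> and \<open>T_D(Q)\<close>. Termination transfers back because along
  an \<open>\<epsilon>\<close>-trajectory every decrement is by at least \<open>\<epsilon>\<close> or to \<open>0\<close>, so a variable that is
  eventually never increased is decremented only finitely often.

  Within \<open>Q\<close>, a solution is terminating because infinite trajectories are maximal, and strongly
  cyclic because every finite trajectory extends to a maximal one by moving each variable by
  exactly \<open>\<epsilon>\<close>; conversely a terminating strong cyclic policy never gets stuck outside the goal.\<close>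

lemma wf_qnp_Num_outside_Vs: "wf_qnp Q \<Longrightarrow> a \<in> Ops Q \<Longrightarrow> X \<notin> Vs Q \<Longrightarrow> Num Q a X = None"
  unfolding wf_qnp_def by blast

lemma wf_qnp_Dec_Pre: "wf_qnp Q \<Longrightarrow> a \<in> Ops Q \<Longrightarrow> Num Q a X = Some Dec \<Longrightarrow> Pos X \<in> Pre Q a"
  unfolding wf_qnp_def by blast

lemma applicable_Dec_pos:
  "wf_qnp Q \<Longrightarrow> a \<in> Ops Q \<Longrightarrow> applicable Q a s \<Longrightarrow> Num Q a X = Some Dec \<Longrightarrow> snd s X > 0"
  using wf_qnp_Dec_Pre by (fastforce simp: applicable_def)

lemma holds_bar: "is_state Q s \<Longrightarrow> holds s l = bholds (bar s) l"
  by (cases l) (auto simp: bar_def is_state_def less_le)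

lemma applicable_bar: "is_state Q s \<Longrightarrow> applicable Q a s = TD_applicable Q a (bar s)"
  by (simp add: applicable_def TD_applicable_def holds_bar)

lemma is_goal_bar: "is_state Q s \<Longrightarrow> is_goal Q s = TD_goal Q (bar s)"
  by (simp add: is_goal_def TD_goal_def holds_bar)

lemma TD_state_bar: "is_state Q s \<Longrightarrow> TD_state Q (bar s)"
  by (auto simp: is_state_def TD_state_def bar_def)

lemma ex_state_bar_eq:
  assumes "TD_state Q b" shows "\<exists>s. is_state Q s \<and> bar s = b"
proof
  let ?s = "(fst b, \<lambda>X. if snd b X then 0 else 1 :: real)"
  show "is_state Q ?s \<and> bar ?s = b"
    using assms by (auto simp: TD_state_def is_state_def bar_def prod_eq_iff)
qed

lemma TD_init_bar: "is_init Q s \<Longrightarrow> TD_init Q (bar s)"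
  by (auto simp: is_init_def TD_init_def TD_state_bar) (auto simp: bar_def)

lemma is_init_if_TD_init_bar:
  assumes wf: "wf_qnp Q" and s: "is_state Q s" and init: "TD_init Q (bar s)"
  shows "is_init Q s"
proof -
  have F: "\<forall>p \<in> Fs Q. fst s p \<longleftrightarrow> PosF p \<in> Init Q"
   and V: "\<forall>X \<in> Vs Q. snd s X = 0 \<longleftrightarrow> Zero X \<in> Init Q"
    using init by (auto simp: TD_init_def bar_def)
  have "holds s l" if l: "l \<in> Init Q" for l
  proof (cases l)
    case (NegF p)
    then have "p \<in> Fs Q" "PosF p \<notin> Init Q"
      using wf l by (auto simp: wf_qnp_def consistent_def)
    then show ?thesis using NegF F by auto
  next
    case (Pos X)
    then have "X \<in> Vs Q" "Zero X \<notin> Init Q"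
      using wf l by (auto simp: wf_qnp_def consistent_def)
    then show ?thesis using Pos V s by (auto simp: is_state_def less_le)
  qed (use wf l F V in \<open>auto simp: wf_qnp_def\<close>)
  then show ?thesis using s F V by (auto simp: is_init_def)
qed

lemma TD_succ_bar:
  assumes succ: "succ Q a s s'" and s: "is_state Q s"
  shows "TD_succ Q a (bar s) (bar s')"
proof -
  have nonneg: "snd s X \<ge> 0" for X using s by (simp add: is_state_def)
  have "TD_state Q (bar s')" using succ by (simp add: succ_def TD_state_bar)
  moreover have "\<forall>p \<in> Fs Q. fst (bar s') p = (if PosF p \<in> Eff Q a then True
      else if NegF p \<in> Eff Q a then False else fst (bar s) p)"
    using succ by (simp add: succ_def bar_def)
  moreover have "case Num Q a X of Some Inc \<Rightarrow> \<not> snd (bar s') X | Some Dec \<Rightarrow> True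
      | None \<Rightarrow> snd (bar s') X = snd (bar s) X" if "X \<in> Vs Q" for X
    using succ that nonneg[of X]
    by (auto simp: succ_def bar_def split: option.splits neff.splits)
  ultimately show ?thesis by (simp add: TD_succ_def)
qed

lemma TD_traj_bar:
  assumes "eps_seq Q \<epsilon> ss as n" and "pi_traj Q \<pi> ss as n"
  shows "TD_traj Q \<pi> (\<lambda>i. bar (ss i)) as n"
  using assms unfolding TD_traj_def eps_seq_def pi_traj_def
  by (auto simp: TD_state_bar applicable_bar is_goal_bar TD_succ_bar dest: order.strict_implies_order)

section \<open>Realizing trajectories of the direct translation\<close>

definition pending_decs :: "('f, 'v, 'a) qnp \<Rightarrow> (nat \<Rightarrow> 'a) \<Rightarrow> enat \<Rightarrow> nat \<Rightarrow> 'v \<Rightarrow> nat set" where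
  "pending_decs Q as n i X = {j. i \<le> j \<and> enat j < n \<and> Num Q (as j) X = Some Dec \<and>
     (\<forall>k \<in> {i..j}. Num Q (as k) X \<noteq> Some Inc)}"

definition incs_before :: "('f, 'v, 'a) qnp \<Rightarrow> (nat \<Rightarrow> 'a) \<Rightarrow> nat \<Rightarrow> 'v \<Rightarrow> nat" where
  "incs_before Q as i X = card {j. j < i \<and> Num Q (as j) X = Some Inc}"

lemma incs_before_0 [simp]: "incs_before Q as 0 X = 0"
  by (simp add: incs_before_def)

lemma incs_before_Suc:
  "incs_before Q as (Suc i) X = incs_before Q as i X + (if Num Q (as i) X = Some Inc then 1 else 0)"
proof -
  have "{j. j < Suc i \<and> Num Q (as j) X = Some Inc} =
        {j. j < i \<and> Num Q (as j) X = Some Inc} \<union> (if Num Q (as i) X = Some Inc then {i} else {})"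
    by (auto simp: less_Suc_eq)
  then show ?thesis by (simp add: incs_before_def)
qed

lemma pending_decs_Inc: "Num Q (as i) X = Some Inc \<Longrightarrow> pending_decs Q as n i X = {}"
  by (auto simp: pending_decs_def)

lemma pending_decs_Suc:
  assumes "Num Q (as i) X \<noteq> Some Inc" and "enat i < n"
  shows "pending_decs Q as n i X =
    pending_decs Q as n (Suc i) X \<union> (if Num Q (as i) X = Some Dec then {i} else {})"
proof (rule set_eqI)
  fix j
  show "j \<in> pending_decs Q as n i X \<longleftrightarrow>
    j \<in> pending_decs Q as n (Suc i) X \<union> (if Num Q (as i) X = Some Dec then {i} else {})"
  proof (cases "i \<le> j")
    case True
    then show ?thesis
      using assms by (cases "j = i") (auto simp: pending_decs_def Icc_eq_insert_lb_nat)
  qed (auto simp: pending_decs_def)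
qed

lemma card_pending_decs_Suc:
  assumes "Num Q (as i) X \<noteq> Some Inc" and "enat i < n" and "finite (pending_decs Q as n (Suc i) X)"
  shows "card (pending_decs Q as n i X) =
    card (pending_decs Q as n (Suc i) X) + (if Num Q (as i) X = Some Dec then 1 else 0)"
proof -
  have "i \<notin> pending_decs Q as n (Suc i) X" by (simp add: pending_decs_def)
  then show ?thesis using pending_decs_Suc[of Q as i X n] assms by auto
qed

text \<open>A \<open>Dec\<close> step lowers the value of \<open>X\<close> by exactly \<open>c X\<close> unless it drops to \<open>0\<close>,
  an \<open>Inc\<close> step raises it by at least \<open>c X\<close>, and other steps keep it.\<close>
definition realization ::
  "('f, 'v, 'a) qnp \<Rightarrow> (nat \<Rightarrow> 'a) \<Rightarrow> enat \<Rightarrow> (nat \<Rightarrow> ('f, 'v) bstate) \<Rightarrow> ('v \<Rightarrow> real) \<Rightarrow> nat \<Rightarrow> ('f, 'v) state"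
  where "realization Q as n bs c i = (fst (bs i), \<lambda>X. if X \<in> Vs Q \<and> \<not> snd (bs i) X
     then c X * (1 + real (card (pending_decs Q as n i X)) + real (incs_before Q as i X)) else 0)"

lemma realization_ge:
  "c X > 0 \<Longrightarrow> X \<in> Vs Q \<Longrightarrow> \<not> snd (bs i) X \<Longrightarrow> snd (realization Q as n bs c i) X \<ge> c X"
  by (simp add: realization_def)

lemma TD_state_traj: "TD_traj Q \<pi> bs as n \<Longrightarrow> enat i \<le> n \<Longrightarrow> TD_state Q (bs i)"
  by (simp add: TD_traj_def)

context
  fixes Q :: "('f, 'v, 'a) qnp" and \<pi> :: "('f, 'v, 'a) policy"
    and bs :: "nat \<Rightarrow> ('f, 'v) bstate" and as :: "nat \<Rightarrow> 'a" and n :: enat and c :: "'v \<Rightarrow> real"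
  assumes wf: "wf_qnp Q" and traj: "TD_traj Q \<pi> bs as n"
    and finite_pending: "\<And>X i. X \<in> Vs Q \<Longrightarrow> finite (pending_decs Q as n i X)"
    and c_pos: "\<And>X. c X > 0"
begin

lemma is_state_realization: "enat i \<le> n \<Longrightarrow> is_state Q (realization Q as n bs c i)"
  using TD_state_traj[OF traj] c_pos
  by (auto simp: TD_state_def is_state_def realization_def intro!: mult_nonneg_nonneg less_imp_le)

lemma bar_realization:
  assumes "enat i \<le> n" shows "bar (realization Q as n bs c i) = bs i"
proof -
  have "snd (realization Q as n bs c i) X = 0 \<longleftrightarrow> snd (bs i) X" for X
  proof (cases "X \<in> Vs Q \<and> \<not> snd (bs i) X")
    case True
    then show ?thesis using realization_ge[of c X Q bs i as n] c_pos[of X] by auto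
  next
    case False
    then show ?thesis using TD_state_traj[OF traj assms] by (auto simp: TD_state_def realization_def)
  qed
  then show ?thesis by (simp add: bar_def prod_eq_iff realization_def)
qed

lemma realization_var_step:
  fixes X :: 'v
  assumes i: "enat i < n" and \<epsilon>: "\<And>X. X \<in> Vs Q \<Longrightarrow> \<epsilon> \<le> c X"
  defines "x \<equiv> \<lambda>j. snd (realization Q as n bs c j) X"
  shows "(case Num Q (as i) X of Some Inc \<Rightarrow> x (Suc i) > x i | Some Dec \<Rightarrow> x (Suc i) < x i
            | None \<Rightarrow> x (Suc i) = x i) \<and>
         (x (Suc i) \<noteq> x i \<longrightarrow> \<bar>x (Suc i) - x i\<bar> \<ge> \<epsilon> \<or> (0 = x (Suc i) \<and> x (Suc i) < x i \<and> x i < \<epsilon>))"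
proof (cases "X \<in> Vs Q")
  case False
  moreover have "as i \<in> Ops Q" using traj i by (simp add: TD_traj_def)
  ultimately show ?thesis using wf_qnp_Num_outside_Vs[OF wf] by (simp add: x_def realization_def)
next
  case X: True
  define D where "D j = real (card (pending_decs Q as n j X))" for j
  define K where "K j = real (incs_before Q as j X)" for j
  have x: "x j = (if \<not> snd (bs j) X then c X * (1 + D j + K j) else 0)" for j
    using X by (simp add: x_def realization_def D_def K_def)
  have D_nonneg: "D j \<ge> 0" and K_nonneg: "K j \<ge> 0" for j
    by (simp_all add: D_def K_def)
  have ops: "as i \<in> Ops Q" and app: "TD_applicable Q (as i) (bs i)"
    and succ: "TD_succ Q (as i) (bs i) (bs (Suc i))"
    using traj i by (auto simp: TD_traj_def)
  have succ_X: "case Num Q (as i) X of Some Inc \<Rightarrow> \<not> snd (bs (Suc i)) X | Some Dec \<Rightarrow> True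
      | None \<Rightarrow> snd (bs (Suc i)) X = snd (bs i) X"
    using succ X by (simp add: TD_succ_def)
  note card_Suc = card_pending_decs_Suc[OF _ i finite_pending[OF X]]
  show ?thesis
  proof (cases "Num Q (as i) X")
    case None
    then have "D (Suc i) = D i" "K (Suc i) = K i"
      using card_Suc by (auto simp: D_def K_def incs_before_Suc)
    then show ?thesis using None succ_X by (simp add: x)
  next
    case (Some e)
    show ?thesis
    proof (cases e)
      case Inc
      have "K (Suc i) = K i + 1" "D i = 0" "\<not> snd (bs (Suc i)) X"
        using Some Inc succ_X by (auto simp: D_def K_def incs_before_Suc pending_decs_Inc)
      then have "x (Suc i) \<ge> x i + c X"
        using c_pos[of X] D_nonneg[of "Suc i"] K_nonneg[of i] by (simp add: x algebra_simps)
      then show ?thesis using Some Inc \<epsilon>[OF X] c_pos[of X] by auto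
    next
      case Dec
      have "D i = D (Suc i) + 1" "K (Suc i) = K i"
        using Some Dec card_Suc by (auto simp: D_def K_def incs_before_Suc)
      moreover have "Pos X \<in> Pre Q (as i)" using wf_qnp_Dec_Pre[OF wf ops] Some Dec by simp
      then have pos: "\<not> snd (bs i) X" using app by (force simp: TD_applicable_def)
      ultimately have "x (Suc i) = (if snd (bs (Suc i)) X then 0 else x i - c X)"
        by (simp add: x algebra_simps)
      moreover have "x i \<ge> c X"
        using realization_ge[of c X Q bs i as n, OF c_pos X pos] by (simp add: x_def)
      ultimately show ?thesis using Some Dec \<epsilon>[OF X] c_pos[of X] by auto
    qed
  qed
qed

lemma realization_step:
  assumes i: "enat i < n" and \<epsilon>: "\<And>X. X \<in> Vs Q \<Longrightarrow> \<epsilon> \<le> c X"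
  shows "succ Q (as i) (realization Q as n bs c i) (realization Q as n bs c (Suc i)) \<and>
         eps_step \<epsilon> (realization Q as n bs c i) (realization Q as n bs c (Suc i))"
proof -
  let ?R = "realization Q as n bs c"
  have "is_state Q (?R (Suc i))" using is_state_realization i by (simp add: Suc_ile_eq)
  moreover have "TD_succ Q (as i) (bs i) (bs (Suc i))" using traj i by (simp add: TD_traj_def)
  then have "\<forall>p \<in> Fs Q. fst (?R (Suc i)) p = (if PosF p \<in> Eff Q (as i) then True
      else if NegF p \<in> Eff Q (as i) then False else fst (?R i) p)"
    by (simp add: TD_succ_def realization_def)
  ultimately show ?thesis
    using realization_var_step[OF i \<epsilon>] by (simp add: succ_def eps_step_def)
qed

end

lemma TD_traj_realizable:
  assumes wf: "wf_qnp Q" and traj: "TD_traj Q \<pi> bs as n"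
    and finite_pending: "\<And>X i. X \<in> Vs Q \<Longrightarrow> finite (pending_decs Q as n i X)"
    and s0: "is_state Q s0" and bar_s0: "bar s0 = bs 0"
  shows "\<exists>\<epsilon> > 0. \<exists>ss. eps_seq Q \<epsilon> ss as n \<and> pi_traj Q \<pi> ss as n \<and>
           (\<forall>i. enat i \<le> n \<longrightarrow> bar (ss i) = bs i) \<and> ss 0 = s0"
proof -
  \<comment> \<open>chosen so that the realization starts in \<open>s0\<close>\<close>
  define c where
    "c X = (if snd (bs 0) X then 1 else snd s0 X / (1 + real (card (pending_decs Q as n 0 X))))"
    for X
  define \<epsilon> where "\<epsilon> = Min (insert 1 (c ` Vs Q))"
  let ?R = "realization Q as n bs c"
  have bs0: "fst (bs 0) = fst s0" "snd (bs 0) X \<longleftrightarrow> snd s0 X = 0" for X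
    using bar_s0[symmetric] by (auto simp: bar_def)
  have c_pos: "c X > 0" for X
    using s0 bs0(2)[of X] by (auto simp: c_def is_state_def less_le add_pos_nonneg)
  have "finite (Vs Q)" using wf by (simp add: wf_qnp_def)
  then have \<epsilon>_pos: "\<epsilon> > 0" and \<epsilon>_le: "\<And>X. X \<in> Vs Q \<Longrightarrow> \<epsilon> \<le> c X"
    using c_pos by (auto simp: \<epsilon>_def)
  note realization = bar_realization[where c = c, OF wf traj finite_pending c_pos]
    is_state_realization[where c = c, OF wf traj finite_pending c_pos]
    realization_step[where c = c, OF wf traj finite_pending c_pos _ \<epsilon>_le]
  have "?R 0 = s0"
  proof -
    have "snd (?R 0) X = snd s0 X" for X
      using s0 bs0(2)[of X] by (auto simp: realization_def c_def is_state_def)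
    then show ?thesis using bs0(1) by (simp add: realization_def prod_eq_iff)
  qed
  moreover have "eps_seq Q \<epsilon> ?R as n"
    using traj realization by (auto simp: eps_seq_def TD_traj_def applicable_bar less_imp_le)
  moreover have "pi_traj Q \<pi> ?R as n"
    using traj realization by (auto simp: pi_traj_def TD_traj_def is_goal_bar less_imp_le)
  ultimately show ?thesis using \<epsilon>_pos realization(1) by blast
qed

lemma finite_pending_decs_enat: "finite (pending_decs Q as (enat m) i X)"
proof -
  have "pending_decs Q as (enat m) i X \<subseteq> {..<m}" by (auto simp: pending_decs_def)
  then show ?thesis by (rule finite_subset) simp
qed

lemma TD_traj_realizable_from_init:
  assumes wf: "wf_qnp Q" and traj: "TD_traj Q \<pi> bs as n" and init: "TD_init Q (bs 0)"
    and finite_pending: "\<And>X i. X \<in> Vs Q \<Longrightarrow> finite (pending_decs Q as n i X)"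
  obtains \<epsilon> ss where "\<epsilon> > 0" "eps_seq Q \<epsilon> ss as n" "pi_traj Q \<pi> ss as n" "is_init Q (ss 0)"
    "\<And>i. enat i \<le> n \<Longrightarrow> bar (ss i) = bs i"
proof -
  obtain s0 where s0: "is_state Q s0" "bar s0 = bs 0"
    using ex_state_bar_eq[of Q "bs 0"] init by (auto simp: TD_init_def)
  then have "is_init Q s0" using is_init_if_TD_init_bar[OF wf] init by simp
  then show ?thesis using TD_traj_realizable[OF wf traj finite_pending s0] that by metis
qed

section \<open>Recurrence and termination\<close>

lemma finite_TD_states:
  assumes "wf_qnp Q" shows "finite {b. TD_state Q b}"
proof -
  let ?b = "\<lambda>(A, B). ((\<lambda>p. p \<in> A), (\<lambda>X. X \<notin> B))"
  have "{b. TD_state Q b} \<subseteq> ?b ` (Pow (Fs Q) \<times> Pow (Vs Q))"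
  proof
    fix b assume "b \<in> {b. TD_state Q b}"
    then have "({p. fst b p}, {X. \<not> snd b X}) \<in> Pow (Fs Q) \<times> Pow (Vs Q)"
      by (auto simp: TD_state_def)
    moreover have "b = ?b ({p. fst b p}, {X. \<not> snd b X})" by (simp add: prod_eq_iff)
    ultimately show "b \<in> ?b ` (Pow (Fs Q) \<times> Pow (Vs Q))" by blast
  qed
  moreover have "finite (Pow (Fs Q) \<times> Pow (Vs Q))" using assms by (simp add: wf_qnp_def)
  ultimately show ?thesis by (metis finite_surj)
qed

lemma finite_range_TD_traj:
  assumes "wf_qnp Q" and "TD_traj Q \<pi> bs as \<infinity>" shows "finite (range bs)"
proof -
  have "range bs \<subseteq> {b. TD_state Q b}" using assms(2) by (auto simp: TD_traj_def)
  then show ?thesis using finite_TD_states[OF assms(1)] finite_subset by blast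
qed

lemma finite_transient_indices:
  assumes "finite (range f)" shows "finite {i. finite {j. f j = f i}}"
proof -
  have "{i. finite {j. f j = f i}} = (\<Union>b \<in> {b \<in> range f. finite {j. f j = b}}. {j. f j = b})"
    by auto
  then show ?thesis using assms by simp
qed

lemma finite_eps_drops:
  fixes x :: "nat \<Rightarrow> real"
  assumes \<epsilon>: "\<epsilon> > 0" and antimono: "\<And>i. N \<le> i \<Longrightarrow> x (Suc i) \<le> x i" and nonneg: "\<And>i. x i \<ge> 0"
  shows "finite {i. N \<le> i \<and> x (Suc i) \<le> x i - \<epsilon>}" (is "finite ?D")
proof (rule ccontr)
  assume "infinite ?D"
  obtain t :: nat where t: "x N < t * \<epsilon>" using reals_Archimedean3[OF \<epsilon>] by blast
  obtain B where B: "finite B" "card B = t" "B \<subseteq> ?D"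
    using infinite_arbitrarily_large[OF \<open>infinite ?D\<close>] by blast
  obtain M where "B \<subseteq> {..<M}" using finite_nat_bounded[OF B(1)] by blast
  with B(3) have B_sub: "B \<subseteq> {N..<max M N}" by (auto simp: subset_iff)
  have "t * \<epsilon> = (\<Sum>i\<in>B. \<epsilon>)" using B(2) by simp
  also have "\<dots> \<le> (\<Sum>i\<in>B. x i - x (Suc i))" using B(3) by (intro sum_mono) auto
  also have "\<dots> \<le> (\<Sum>i = N..<max M N. x i - x (Suc i))"
    using B_sub antimono by (intro sum_mono2) auto
  also have "\<dots> = x N - x (max M N)"
    using sum_Suc_diff'[of N "max M N" "\<lambda>i. - x i"] by simp
  also have "\<dots> \<le> x N" using nonneg by simp
  finally show False using t by simp
qed

lemma eps_step_decrease:
  assumes "eps_step \<epsilon> s s'" and "snd s' X < snd s X"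
  shows "snd s' X = 0 \<or> snd s' X \<le> snd s X - \<epsilon>"
  using assms(1)[unfolded eps_step_def, rule_format, of X] assms(2) by auto

text \<open>Every decrement is by at least \<open>\<epsilon>\<close> or down to \<open>0\<close>, and at \<open>0\<close> no further
  decrement is applicable.\<close>
lemma finite_Dec_if_eventually_no_Inc:
  assumes wf: "wf_qnp Q" and \<epsilon>: "\<epsilon> > 0" and run: "eps_seq Q \<epsilon> ss as \<infinity>" and X: "X \<in> Vs Q"
    and no_Inc: "\<And>i. N \<le> i \<Longrightarrow> Num Q (as i) X \<noteq> Some Inc"
  shows "finite {i. Num Q (as i) X = Some Dec}" (is "finite ?Dec")
proof -
  define x where "x i = snd (ss i) X" for i
  have steps: "as i \<in> Ops Q" "applicable Q (as i) (ss i)" "succ Q (as i) (ss i) (ss (Suc i))"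
    "eps_step \<epsilon> (ss i) (ss (Suc i))" "is_state Q (ss i)" for i
    using run by (auto simp: eps_seq_def)
  have nonneg: "x i \<ge> 0" for i using steps(5) by (simp add: x_def is_state_def)
  have change: "case Num Q (as i) X of Some Inc \<Rightarrow> x (Suc i) > x i
      | Some Dec \<Rightarrow> x (Suc i) < x i | None \<Rightarrow> x (Suc i) = x i" for i
    using steps(3)[of i] X unfolding succ_def x_def by blast
  have antimono: "x (Suc i) \<le> x i" if "N \<le> i" for i
    using change[of i] no_Inc[OF that] by (auto split: option.splits neff.splits)
  have Dec: "x i > 0 \<and> (x (Suc i) = 0 \<or> x (Suc i) \<le> x i - \<epsilon>)" if "i \<in> ?Dec" for i
    using that change[of i] applicable_Dec_pos[OF wf steps(1,2)] eps_step_decrease[OF steps(4)]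
    by (simp add: x_def)
  show ?thesis
  proof (cases "\<exists>i \<ge> N. i \<in> ?Dec \<and> x (Suc i) = 0")
    case True
    then obtain i where i: "N \<le> i" "x (Suc i) = 0" by blast
    have "j \<le> i" if "j \<in> ?Dec" for j
    proof (rule ccontr)
      assume "\<not> j \<le> i"
      have "x j \<le> x (Suc i)"
        by (rule lift_Suc_antimono_le_ivl[where N = "{N..}"])
          (use antimono i(1) \<open>\<not> j \<le> i\<close> in auto)
      then show False using Dec[OF that] i(2) by simp
    qed
    then have "?Dec \<subseteq> {..i}" by auto
    then show ?thesis by (rule finite_subset) simp
  next
    case False
    have "?Dec \<subseteq> {..<N} \<union> {i. N \<le> i \<and> x (Suc i) \<le> x i - \<epsilon>}"
    proof
      fix i assume "i \<in> ?Dec"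
      then show "i \<in> {..<N} \<union> {i. N \<le> i \<and> x (Suc i) \<le> x i - \<epsilon>}"
        using False Dec[of i] by (cases "N \<le> i") auto
    qed
    then show ?thesis
      using finite_eps_drops[where x = x, OF \<epsilon> antimono nonneg] finite_subset by blast
  qed
qed

lemma finite_pending_decs_if_not_terminating:
  assumes wf: "wf_qnp Q" and traj: "TD_traj Q \<pi> bs as \<infinity>" and X: "X \<in> Vs Q"
    and not_term: "\<not> terminating_TD_traj Q \<pi> bs"
  shows "finite (pending_decs Q as \<infinity> i X)"
proof -
  have \<pi>: "\<pi> (bs j) = Some (as j)" for j using traj by (simp add: TD_traj_def)
  from not_term X consider
    (no_Dec) "\<And>b a. infinite {i. bs i = b} \<Longrightarrow> \<pi> b = Some a \<Longrightarrow> Num Q a X \<noteq> Some Dec"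
    | (Inc) b a where "infinite {i. bs i = b}" "\<pi> b = Some a" "Num Q a X = Some Inc"
    unfolding terminating_TD_traj_def by blast
  then show ?thesis
  proof cases
    case no_Dec
    have "pending_decs Q as \<infinity> i X \<subseteq> {i. finite {j. bs j = bs i}}"
    proof
      fix j assume "j \<in> pending_decs Q as \<infinity> i X"
      then have "Num Q (as j) X = Some Dec" by (simp add: pending_decs_def)
      then show "j \<in> {i. finite {j. bs j = bs i}}" using no_Dec \<pi>[of j] by blast
    qed
    then show ?thesis
      using finite_transient_indices[OF finite_range_TD_traj[OF wf traj]] finite_subset by blast
  next
    case Inc
    then obtain j where "j \<ge> i" "bs j = b" by (auto simp: infinite_nat_iff_unbounded_le)
    with Inc \<pi>[of j] have "pending_decs Q as \<infinity> i X \<subseteq> {..<j}"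
      by (auto simp: pending_decs_def not_less)
    then show ?thesis by (rule finite_subset) simp
  qed
qed

lemma eps_seq_prefix: "eps_seq Q \<epsilon> ss as n \<Longrightarrow> k \<le> n \<Longrightarrow> eps_seq Q \<epsilon> ss as k"
  by (auto simp: eps_seq_def)

lemma pi_traj_prefix: "pi_traj Q \<pi> ss as n \<Longrightarrow> k \<le> n \<Longrightarrow> pi_traj Q \<pi> ss as k"
  by (auto simp: pi_traj_def)

lemma
  assumes run: "eps_seq Q \<epsilon> ss as (enat m)" "pi_traj Q \<pi> ss as (enat m)"
    and run': "eps_seq Q \<epsilon> ss' as' n" "pi_traj Q \<pi> ss' as' n"
    and start: "ss' 0 = ss m"
  defines "S \<equiv> \<lambda>i. if i \<le> m then ss i else ss' (i - m)"
    and "A \<equiv> \<lambda>i. if i < m then as i else as' (i - m)"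
  shows eps_seq_append: "eps_seq Q \<epsilon> S A (enat m + n)"
    and pi_traj_append: "pi_traj Q \<pi> S A (enat m + n)"
proof -
  have S_ge: "S i = ss' (i - m)" if "m \<le> i" for i
    using that start by (auto simp: S_def)
  have after: "enat i < enat m + n \<longleftrightarrow> enat (i - m) < n"
      "enat i \<le> enat m + n \<longleftrightarrow> enat (i - m) \<le> n" if "m \<le> i" for i
    using that by (cases n; auto)+
  have suffix: "S i = ss' (i - m) \<and> S (Suc i) = ss' (Suc (i - m)) \<and> A i = as' (i - m)"
    if "m \<le> i" for i
    using that S_ge[of i] S_ge[of "Suc i"] by (simp add: A_def Suc_diff_le)
  have prefix: "S i = ss i \<and> S (Suc i) = ss (Suc i) \<and> A i = as i" if "i < m" for i
    using that by (simp add: S_def A_def)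
  have "is_state Q (S i)" if "enat i \<le> enat m + n" for i
    using that run(1) run'(1) S_ge[of i] after(2)[of i]
    by (cases "m \<le> i") (auto simp: eps_seq_def S_def)
  moreover have "A i \<in> Ops Q \<and> applicable Q (A i) (S i) \<and> succ Q (A i) (S i) (S (Suc i)) \<and>
      eps_step \<epsilon> (S i) (S (Suc i))" if i: "enat i < enat m + n" for i
  proof (cases "m \<le> i")
    case True
    then show ?thesis using run'(1) i suffix[OF True] after(1)[OF True] by (simp add: eps_seq_def)
  next
    case False
    then show ?thesis using run(1) prefix[of i] by (simp add: eps_seq_def)
  qed
  ultimately show "eps_seq Q \<epsilon> S A (enat m + n)" by (simp add: eps_seq_def)
  show "pi_traj Q \<pi> S A (enat m + n)"
    unfolding pi_traj_def
  proof (intro allI impI)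
    fix i assume i: "enat i < enat m + n"
    show "\<pi> (bar (S i)) = Some (A i) \<and> \<not> is_goal Q (S i)"
    proof (cases "m \<le> i")
      case True
      then show ?thesis using run'(2) i suffix[OF True] after(1)[OF True] by (simp add: pi_traj_def)
    next
      case False
      then show ?thesis using run(2) prefix[of i] by (simp add: pi_traj_def)
    qed
  qed
qed

definition greedy_succ :: "('f, 'v, 'a) qnp \<Rightarrow> real \<Rightarrow> 'a \<Rightarrow> ('f, 'v) state \<Rightarrow> ('f, 'v) state" where
  "greedy_succ Q \<epsilon> a s =
     ((\<lambda>p. if p \<in> Fs Q then (if PosF p \<in> Eff Q a then True
            else if NegF p \<in> Eff Q a then False else fst s p) else False),
      (\<lambda>X. if X \<in> Vs Q then (case Num Q a X of Some Inc \<Rightarrow> snd s X + \<epsilon>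
            | Some Dec \<Rightarrow> max 0 (snd s X - \<epsilon>) | None \<Rightarrow> snd s X) else 0))"

lemma is_state_greedy_succ: "\<epsilon> > 0 \<Longrightarrow> is_state Q s \<Longrightarrow> is_state Q (greedy_succ Q \<epsilon> a s)"
  by (auto simp: is_state_def greedy_succ_def split: option.splits neff.splits)

lemma greedy_succ:
  assumes wf: "wf_qnp Q" and \<epsilon>: "\<epsilon> > 0" and s: "is_state Q s"
    and a: "a \<in> Ops Q" "applicable Q a s"
  shows "succ Q a s (greedy_succ Q \<epsilon> a s) \<and> eps_step \<epsilon> s (greedy_succ Q \<epsilon> a s)"
proof -
  let ?s' = "greedy_succ Q \<epsilon> a s"
  have Dec_pos: "Num Q a X = Some Dec \<Longrightarrow> snd s X > 0" for X
    using applicable_Dec_pos[OF wf a] .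
  have "(case Num Q a X of Some Inc \<Rightarrow> snd ?s' X > snd s X
      | Some Dec \<Rightarrow> snd ?s' X < snd s X | None \<Rightarrow> snd ?s' X = snd s X) \<and>
      (snd ?s' X \<noteq> snd s X \<longrightarrow> \<bar>snd ?s' X - snd s X\<bar> \<ge> \<epsilon> \<or>
         (0 = snd ?s' X \<and> snd ?s' X < snd s X \<and> snd s X < \<epsilon>))" for X
  proof (cases "X \<in> Vs Q")
    case True
    then show ?thesis using \<epsilon> Dec_pos[of X]
      by (auto simp: greedy_succ_def max_def abs_if split: option.splits neff.splits)
  next
    case False
    then show ?thesis
      using s wf_qnp_Num_outside_Vs[OF wf a(1)] by (simp add: greedy_succ_def is_state_def)
  qed
  moreover have "\<forall>p \<in> Fs Q. fst ?s' p = (if PosF p \<in> Eff Q a then True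
      else if NegF p \<in> Eff Q a then False else fst s p)"
    by (simp add: greedy_succ_def)
  ultimately show ?thesis
    using is_state_greedy_succ[OF \<epsilon> s] by (simp add: succ_def eps_step_def)
qed

lemma ex_maximal_run:
  assumes wf: "wf_qnp Q" and \<pi>: "is_policy Q \<pi>" and \<epsilon>: "\<epsilon> > 0" and s: "is_state Q s"
  shows "\<exists>ss as n. ss 0 = s \<and> eps_seq Q \<epsilon> ss as n \<and> pi_traj Q \<pi> ss as n \<and> maximal Q \<pi> ss n"
proof -
  define act where "act t = the (\<pi> (bar t))" for t
  define stop where "stop t \<longleftrightarrow> is_goal Q t \<or> \<pi> (bar t) = None \<or> \<not> applicable Q (act t) t" for t
  define ss where "ss k = ((\<lambda>t. greedy_succ Q \<epsilon> (act t) t) ^^ k) s" for k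
  define as where "as k = act (ss k)" for k
  have ss_Suc: "ss (Suc k) = greedy_succ Q \<epsilon> (as k) (ss k)" for k
    by (simp add: ss_def as_def)
  have ss_0: "ss 0 = s" by (simp add: ss_def)
  have states: "is_state Q (ss k)" for k
    by (induction k) (simp_all add: ss_0 s ss_Suc is_state_greedy_succ[OF \<epsilon>])
  have step: "\<pi> (bar (ss k)) = Some (as k) \<and> as k \<in> Ops Q \<and> applicable Q (as k) (ss k) \<and>
      \<not> is_goal Q (ss k) \<and> succ Q (as k) (ss k) (ss (Suc k)) \<and> eps_step \<epsilon> (ss k) (ss (Suc k))"
    if go: "\<not> stop (ss k)" for k
  proof -
    obtain a where a: "\<pi> (bar (ss k)) = Some a" using go by (auto simp: stop_def)
    moreover from a have "as k = a" by (simp add: as_def act_def)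
    moreover have "a \<in> Ops Q" using \<pi> a unfolding is_policy_def by blast
    ultimately show ?thesis
      using go greedy_succ[OF wf \<epsilon> states] by (simp add: stop_def as_def act_def ss_Suc)
  qed
  have run: "eps_seq Q \<epsilon> ss as n \<and> pi_traj Q \<pi> ss as n"
    if "\<And>k. enat k < n \<Longrightarrow> \<not> stop (ss k)" for n
    using that step states by (simp add: eps_seq_def pi_traj_def)
  show ?thesis
  proof (cases "\<exists>k. stop (ss k)")
    case True
    define k where "k = (LEAST k. stop (ss k))"
    have k: "stop (ss k)" using LeastI_ex[OF True] by (simp add: k_def)
    have before: "\<not> stop (ss j)" if "j < k" for j using not_less_Least that by (simp add: k_def)
    have "maximal Q \<pi> ss (enat k)"
    proof (cases "\<pi> (bar (ss k))")
      case (Some a)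
      then show ?thesis using k by (auto simp: maximal_def stop_def act_def)
    qed (simp add: maximal_def)
    then show ?thesis using run[of "enat k"] before ss_0 by auto
  next
    case False
    then show ?thesis using run[of \<infinity>] ss_0 by (auto simp: maximal_def)
  qed
qed

lemma solves_imp_Q_terminating:
  assumes "solves \<pi> Q" shows "Q_terminating \<pi> Q"
  unfolding Q_terminating_def
proof (intro allI impI notI)
  fix ss as n
  assume run: "trajectory Q ss as n \<and> is_init Q (ss 0) \<and> pi_traj Q \<pi> ss as n" and "n = \<infinity>"
  then have "maximal Q \<pi> ss n" by (simp add: maximal_def)
  with assms run have "reaches_goal Q ss n" by (auto simp: solves_def trajectory_def)
  with run \<open>n = \<infinity>\<close> show False by (auto simp: reaches_goal_def pi_traj_def)
qed

lemma solves_imp_strong_cyclic_Q: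
  assumes wf: "wf_qnp Q" and \<pi>: "is_policy Q \<pi>" and sol: "solves \<pi> Q"
  shows "strong_cyclic_Q \<pi> Q"
  unfolding strong_cyclic_Q_def
proof (intro allI impI)
  fix ss as m
  assume "trajectory Q ss as (enat m) \<and> is_init Q (ss 0) \<and> pi_traj Q \<pi> ss as (enat m)"
  then obtain \<epsilon> where \<epsilon>: "\<epsilon> > 0" and run: "eps_seq Q \<epsilon> ss as (enat m)" "pi_traj Q \<pi> ss as (enat m)"
    and init: "is_init Q (ss 0)"
    by (auto simp: trajectory_def)
  have "is_state Q (ss m)" using run(1) by (simp add: eps_seq_def)
  then obtain ss' as' n where start: "ss' 0 = ss m"
    and run': "eps_seq Q \<epsilon> ss' as' n" "pi_traj Q \<pi> ss' as' n" and max: "maximal Q \<pi> ss' n"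
    using ex_maximal_run[OF wf \<pi> \<epsilon>] by blast
  define S where "S = (\<lambda>i. if i \<le> m then ss i else ss' (i - m))"
  define A where "A = (\<lambda>i. if i < m then as i else as' (i - m))"
  have S_ge: "S i = ss' (i - m)" if "m \<le> i" for i using that start by (simp add: S_def)
  have "maximal Q \<pi> S (enat m + n)"
    using max S_ge[of "m + _"] by (cases n) (auto simp: maximal_def)
  then have "reaches_goal Q S (enat m + n)"
    using sol \<epsilon> init eps_seq_append[OF run run' start] pi_traj_append[OF run run' start]
    unfolding solves_def S_def A_def by auto
  then obtain i where i: "enat i \<le> enat m + n" "is_goal Q (S i)" by (auto simp: reaches_goal_def)
  have "m \<le> i"
    using i(2) run(2) by (cases "m \<le> i") (auto simp: S_def pi_traj_def)
  then have "is_goal Q (ss' (i - m))" and "enat (i - m) \<le> n"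
    using i S_ge by (cases n; auto)+
  then show "\<exists>ss' as' k. trajectory Q ss' as' (enat k) \<and> pi_traj Q \<pi> ss' as' (enat k) \<and>
      ss' 0 = ss m \<and> is_goal Q (ss' k)"
    using eps_seq_prefix[OF run'(1)] pi_traj_prefix[OF run'(2)] \<epsilon> start
    unfolding trajectory_def by blast
qed

lemma strong_cyclic_Q_terminating_imp_solves:
  assumes sc: "strong_cyclic_Q \<pi> Q" and terminating: "Q_terminating \<pi> Q"
  shows "solves \<pi> Q"
  unfolding solves_def
proof (intro allI impI)
  fix \<epsilon> :: real and ss as n
  assume "\<epsilon> > 0" and run: "eps_seq Q \<epsilon> ss as n \<and> is_init Q (ss 0) \<and> pi_traj Q \<pi> ss as n \<and>
    maximal Q \<pi> ss n"
  then have traj: "trajectory Q ss as n" by (auto simp: trajectory_def)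
  then have "n \<noteq> \<infinity>" using terminating run by (auto simp: Q_terminating_def)
  then obtain m where m: "n = enat m" by (cases n) auto
  show "reaches_goal Q ss n"
  proof (rule ccontr)
    assume "\<not> reaches_goal Q ss n"
    then have "\<not> is_goal Q (ss m)" using m by (auto simp: reaches_goal_def)
    with run m have stuck: "\<pi> (bar (ss m)) = None \<or>
        (\<exists>a. \<pi> (bar (ss m)) = Some a \<and> \<not> applicable Q a (ss m))"
      by (auto simp: maximal_def)
    obtain ss' as' k where run': "trajectory Q ss' as' (enat k)" "pi_traj Q \<pi> ss' as' (enat k)"
      and "ss' 0 = ss m" "is_goal Q (ss' k)"
      using sc traj run m unfolding strong_cyclic_Q_def by blast
    moreover from calculation \<open>\<not> is_goal Q (ss m)\<close> have "k \<noteq> 0" by (cases "k = 0") auto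
    ultimately have "\<pi> (bar (ss m)) = Some (as' 0)" "applicable Q (as' 0) (ss m)"
      unfolding pi_traj_def trajectory_def eps_seq_def by auto
    with stuck show False by auto
  qed
qed

lemma strong_cyclic_Q_imp_TD:
  assumes wf: "wf_qnp Q" and sc: "strong_cyclic_Q \<pi> Q"
  shows "strong_cyclic_TD \<pi> Q"
  unfolding strong_cyclic_TD_def
proof (intro allI impI)
  fix bs as m
  assume "TD_traj Q \<pi> bs as (enat m) \<and> TD_init Q (bs 0)"
  then obtain \<epsilon> ss where "\<epsilon> > 0" "eps_seq Q \<epsilon> ss as (enat m)" "pi_traj Q \<pi> ss as (enat m)"
    "is_init Q (ss 0)" and bar_ss: "\<And>i. enat i \<le> enat m \<Longrightarrow> bar (ss i) = bs i"
    using TD_traj_realizable_from_init[OF wf _ _ finite_pending_decs_enat] by blast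
  then obtain \<epsilon>' ss' as' k where run': "eps_seq Q \<epsilon>' ss' as' (enat k)" "pi_traj Q \<pi> ss' as' (enat k)"
    and start: "ss' 0 = ss m" and goal: "is_goal Q (ss' k)"
    using sc unfolding strong_cyclic_Q_def trajectory_def by blast
  have "TD_traj Q \<pi> (\<lambda>i. bar (ss' i)) as' (enat k)" using TD_traj_bar[OF run'] .
  moreover have "is_state Q (ss' k)" using run'(1) by (simp add: eps_seq_def)
  then have "TD_goal Q (bar (ss' k))" using goal by (simp add: is_goal_bar)
  moreover have "bar (ss' 0) = bs m" using start bar_ss[of m] by simp
  ultimately show "\<exists>bs' as' k. TD_traj Q \<pi> bs' as' (enat k) \<and> bs' 0 = bs m \<and> TD_goal Q (bs' k)"
    by blast
qed

lemma strong_cyclic_TD_imp_Q: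
  assumes wf: "wf_qnp Q" and sc: "strong_cyclic_TD \<pi> Q"
  shows "strong_cyclic_Q \<pi> Q"
  unfolding strong_cyclic_Q_def
proof (intro allI impI)
  fix ss as m
  assume "trajectory Q ss as (enat m) \<and> is_init Q (ss 0) \<and> pi_traj Q \<pi> ss as (enat m)"
  then obtain \<epsilon> where run: "eps_seq Q \<epsilon> ss as (enat m)" "pi_traj Q \<pi> ss as (enat m)"
    and init: "is_init Q (ss 0)"
    by (auto simp: trajectory_def)
  have "TD_traj Q \<pi> (\<lambda>i. bar (ss i)) as (enat m)" using TD_traj_bar[OF run] .
  moreover have "TD_init Q (bar (ss 0))" using TD_init_bar[OF init] .
  ultimately obtain bs' as' k where traj': "TD_traj Q \<pi> bs' as' (enat k)"
    and start: "bar (ss m) = bs' 0" and goal: "TD_goal Q (bs' k)"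
    using sc unfolding strong_cyclic_TD_def by fastforce
  have "is_state Q (ss m)" using run(1) by (simp add: eps_seq_def)
  then obtain \<epsilon>' ss' where "\<epsilon>' > 0" "eps_seq Q \<epsilon>' ss' as' (enat k)" "pi_traj Q \<pi> ss' as' (enat k)"
    "bar (ss' k) = bs' k" "ss' 0 = ss m"
    using TD_traj_realizable[OF wf traj' finite_pending_decs_enat _ start] by blast
  moreover have "is_state Q (ss' k)" using calculation(2) by (simp add: eps_seq_def)
  then have "is_goal Q (ss' k)" using calculation(4) goal by (simp add: is_goal_bar)
  ultimately show "\<exists>ss' as' k. trajectory Q ss' as' (enat k) \<and> pi_traj Q \<pi> ss' as' (enat k) \<and>
      ss' 0 = ss m \<and> is_goal Q (ss' k)"
    unfolding trajectory_def by blast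
qed

lemma Q_terminating_imp_TD_terminating:
  assumes wf: "wf_qnp Q" and terminating: "Q_terminating \<pi> Q"
  shows "TD_terminating \<pi> Q"
  unfolding TD_terminating_def
proof (intro allI impI)
  fix bs as
  assume traj: "TD_traj Q \<pi> bs as \<infinity> \<and> TD_init Q (bs 0)"
  show "terminating_TD_traj Q \<pi> bs"
  proof (rule ccontr)
    assume "\<not> terminating_TD_traj Q \<pi> bs"
    with traj have "finite (pending_decs Q as \<infinity> i X)" if "X \<in> Vs Q" for X i
      using finite_pending_decs_if_not_terminating[OF wf _ that] by blast
    then obtain \<epsilon> ss where "\<epsilon> > 0" "eps_seq Q \<epsilon> ss as \<infinity>" "pi_traj Q \<pi> ss as \<infinity>" "is_init Q (ss 0)"
      using TD_traj_realizable_from_init[OF wf] traj by blast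
    then show False using terminating by (auto simp: Q_terminating_def trajectory_def)
  qed
qed

text \<open>Eventually only recurrent boolean states occur, so the variable \<open>X\<close> witnessing
  termination is eventually never incremented but is decremented infinitely often.\<close>
lemma TD_terminating_imp_Q_terminating:
  assumes wf: "wf_qnp Q" and terminating: "TD_terminating \<pi> Q"
  shows "Q_terminating \<pi> Q"
  unfolding Q_terminating_def
proof (intro allI impI notI)
  fix ss as n
  assume "trajectory Q ss as n \<and> is_init Q (ss 0) \<and> pi_traj Q \<pi> ss as n" and "n = \<infinity>"
  then obtain \<epsilon> where \<epsilon>: "\<epsilon> > 0" and run: "eps_seq Q \<epsilon> ss as \<infinity>" "pi_traj Q \<pi> ss as \<infinity>"
    and init: "is_init Q (ss 0)"
    by (auto simp: trajectory_def)
  define bs where "bs i = bar (ss i)" for i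
  have traj: "TD_traj Q \<pi> bs as \<infinity>" unfolding bs_def using TD_traj_bar[OF run] .
  have \<pi>: "\<pi> (bs i) = Some (as i)" for i using run(2) by (simp add: pi_traj_def bs_def)
  have "TD_init Q (bs 0)" using TD_init_bar[OF init] by (simp add: bs_def)
  then obtain X b a where X: "X \<in> Vs Q" and b: "infinite {i. bs i = b}" "\<pi> b = Some a"
    and Dec: "Num Q a X = Some Dec"
    and no_Inc: "\<And>b a. infinite {i. bs i = b} \<Longrightarrow> \<pi> b = Some a \<Longrightarrow> Num Q a X \<noteq> Some Inc"
    using terminating traj unfolding TD_terminating_def terminating_TD_traj_def by blast
  obtain N where N: "{i. finite {j. bs j = bs i}} \<subseteq> {..<N}"
    using finite_nat_bounded[OF finite_transient_indices[OF finite_range_TD_traj[OF wf traj]]] by blast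
  have "Num Q (as i) X \<noteq> Some Inc" if "N \<le> i" for i
    using N that no_Inc \<pi>[of i] by fastforce
  then have "finite {i. Num Q (as i) X = Some Dec}"
    using finite_Dec_if_eventually_no_Inc[OF wf \<epsilon> run(1) X] by blast
  moreover have "{i. bs i = b} \<subseteq> {i. Num Q (as i) X = Some Dec}" using \<pi> b(2) Dec by auto
  ultimately show False using b(1) finite_subset by blast
qed

theorem theorem5:
  fixes Q :: "('f, 'v, 'a) qnp" and \<pi> :: "('f, 'v, 'a) policy"
  assumes "wf_qnp Q" and "is_policy Q \<pi>"
  shows "(solves \<pi> Q \<longleftrightarrow> strong_cyclic_Q \<pi> Q \<and> Q_terminating \<pi> Q) \<and>
         (strong_cyclic_Q \<pi> Q \<and> Q_terminating \<pi> Q \<longleftrightarrow> strong_cyclic_TD \<pi> Q \<and> TD_terminating \<pi> Q)"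
  using solves_imp_Q_terminating solves_imp_strong_cyclic_Q[OF assms]
    strong_cyclic_Q_terminating_imp_solves
    strong_cyclic_Q_imp_TD[OF assms(1)] strong_cyclic_TD_imp_Q[OF assms(1)]
    Q_terminating_imp_TD_terminating[OF assms(1)] TD_terminating_imp_Q_terminating[OF assms(1)]
  by blast

end
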